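(* Let $n\ge1$, $p,q\in(0,1)^n$, and let $P=\operatorname{Ber}(p)$, $Q=\operatorname{Ber}(q)$ be probability measures on $\{0,1\}^n$. Then $$\sqrt{\prod_{i=1}^n\frac{1-(p_i-q_i)^2}{2}}\;\le\;\sum_{x\in\{0,1\}^n}\sqrt{P(x)Q(x)}\;\le\;\sqrt{\prod_{i=1}^n\big[1-(p_i-q_i)^2\big]}.$$
   Context: For $p=(p_1,\ldots,p_n)\in(0,1)^n$, $\operatorname{Ber}(p)$ is the product Bernoulli probability measure on $\{0,1\}^n$: $\operatorname{Ber}(p)(x)=\prod_{i=1}^n p_i^{x_i}(1-p_i)^{1-x_i}$. *)

theory Defs
  imports Complex_Main "HOL-Library.FuncSet"
begin

definition cube :: "nat \<Rightarrow> (nat \<Rightarrow> nat) set" where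
  "cube n = PiE {..<n} (\<lambda>_. {0, 1})"

definition Ber :: "nat \<Rightarrow> (nat \<Rightarrow> real) \<Rightarrow> (nat \<Rightarrow> nat) \<Rightarrow> real" where
  "Ber n p x = (\<Prod>i<n. p i ^ x i * (1 - p i) ^ (1 - x i))"

end

theory Submission
  imports Defs
begin

text \<open>
  The affinity \<open>\<Sum>\<^sub>x sqrt (P x * Q x)\<close> of two product measures factors over the
  coordinates, so it is the product of the one-dimensional affinities
  \<open>b = sqrt (p * q) + sqrt ((1 - p) * (1 - q))\<close>. Expanding the square,
  \<open>b\<^sup>2 = (1 - p) * (1 - q) + p * q + 2 * sqrt (p * (1 - p) * q * (1 - q))\<close>:
  dropping the square-root term gives the lower bound \<open>(1 - (p - q)\<^sup>2) / 2\<close>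
  up to the square \<open>(1 - p - q)\<^sup>2 / 2\<close>, and bounding it by AM-GM gives the upper
  bound \<open>1 - (p - q)\<^sup>2\<close>.
\<close>

definition bernoulli_affinity :: "real \<Rightarrow> real \<Rightarrow> real" where
  "bernoulli_affinity p q = sqrt (p * q) + sqrt ((1 - p) * (1 - q))"

lemma real_sqrt_prod: "sqrt (prod f A) = (\<Prod>i\<in>A. sqrt (f i))"
  by (induction A rule: infinite_finite_induct) (simp_all add: real_sqrt_mult)

lemma sqrt_prod_le_prod:
  fixes a b :: "'i \<Rightarrow> real"
  assumes "\<And>i. i \<in> A \<Longrightarrow> 0 \<le> a i" and "\<And>i. i \<in> A \<Longrightarrow> a i \<le> (b i)\<^sup>2"
    and "\<And>i. i \<in> A \<Longrightarrow> 0 \<le> b i"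
  shows "sqrt (prod a A) \<le> prod b A"
  unfolding real_sqrt_prod using assms
  by (intro prod_mono) (simp add: real_le_lsqrt)

lemma prod_le_sqrt_prod:
  fixes b c :: "'i \<Rightarrow> real"
  assumes "\<And>i. i \<in> A \<Longrightarrow> (b i)\<^sup>2 \<le> c i" and "\<And>i. i \<in> A \<Longrightarrow> 0 \<le> b i"
  shows "prod b A \<le> sqrt (prod c A)"
  unfolding real_sqrt_prod using assms
  by (intro prod_mono) (simp add: real_le_rsqrt)

text \<open>No range hypotheses are needed: \<^const>\<open>sqrt\<close> is odd, hence multiplicative on all reals.\<close>

lemma sum_cube_sqrt_Ber_mult:
  "(\<Sum>x\<in>cube n. sqrt (Ber n p x * Ber n q x)) = (\<Prod>i<n. bernoulli_affinity (p i) (q i))"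
proof -
  define f where "f i k = sqrt (p i ^ k * (1 - p i) ^ (1 - k) * (q i ^ k * (1 - q i) ^ (1 - k)))"
    for i k
  have "(\<Sum>x\<in>cube n. sqrt (Ber n p x * Ber n q x)) = (\<Sum>x\<in>cube n. \<Prod>i<n. f i (x i))"
    unfolding Ber_def f_def by (simp add: prod.distrib[symmetric] real_sqrt_prod)
  also have "\<dots> = (\<Prod>i<n. \<Sum>k\<in>{0, 1}. f i k)"
    unfolding cube_def by (rule prod_sum_PiE[symmetric]) auto
  also have "\<dots> = (\<Prod>i<n. bernoulli_affinity (p i) (q i))"
    by (rule prod.cong) (auto simp: f_def bernoulli_affinity_def mult.commute)
  finally show ?thesis .
qed

context
  fixes p q :: real
  assumes p: "0 \<le> p" "p \<le> 1" and q: "0 \<le> q" "q \<le> 1"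
begin

lemma bernoulli_affinity_nonneg: "0 \<le> bernoulli_affinity p q"
  using p q by (simp add: bernoulli_affinity_def)

lemma square_diff_le_one: "(p - q)\<^sup>2 \<le> 1"
  using p q by (simp add: abs_square_le_1)

lemma bernoulli_affinity_square:
  "(bernoulli_affinity p q)\<^sup>2 = (1 - p) * (1 - q) + p * q + 2 * sqrt (p * (1 - p) * (q * (1 - q)))"
proof -
  have "sqrt (p * q) * sqrt ((1 - p) * (1 - q)) = sqrt (p * (1 - p) * (q * (1 - q)))"
    by (simp add: real_sqrt_mult[symmetric] algebra_simps)
  moreover have "(sqrt (p * q))\<^sup>2 = p * q" "(sqrt ((1 - p) * (1 - q)))\<^sup>2 = (1 - p) * (1 - q)"
    using p q by simp_all
  ultimately show ?thesis
    unfolding bernoulli_affinity_def power2_sum by simp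
qed

lemma bernoulli_affinity_square_lower: "(1 - (p - q)\<^sup>2) / 2 \<le> (bernoulli_affinity p q)\<^sup>2"
proof -
  have "(1 - (p - q)\<^sup>2) / 2 = (1 - p) * (1 - q) + p * q - (1 - p - q)\<^sup>2 / 2"
    by (simp add: power2_eq_square field_simps)
  moreover have "0 \<le> sqrt (p * (1 - p) * (q * (1 - q)))"
    using p q by simp
  ultimately show ?thesis
    unfolding bernoulli_affinity_square using zero_le_power2[of "1 - p - q"] by linarith
qed

lemma bernoulli_affinity_square_upper: "(bernoulli_affinity p q)\<^sup>2 \<le> 1 - (p - q)\<^sup>2"
proof -
  have "0 \<le> p * (1 - p)" "0 \<le> q * (1 - q)"
    using p q by auto
  from arith_geo_mean_sqrt[OF this]
  have "2 * sqrt (p * (1 - p) * (q * (1 - q))) \<le> p * (1 - p) + q * (1 - q)"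
    by (simp add: field_simps)
  then show ?thesis
    unfolding bernoulli_affinity_square by (simp add: power2_eq_square algebra_simps)
qed

end

theorem lemma1:
  fixes n :: nat and p q :: "nat \<Rightarrow> real"
  assumes "n \<ge> 1"
    and "\<And>i. i < n \<Longrightarrow> 0 < p i \<and> p i < 1"
    and "\<And>i. i < n \<Longrightarrow> 0 < q i \<and> q i < 1"
  shows "sqrt (\<Prod>i<n. (1 - (p i - q i)^2) / 2)
           \<le> (\<Sum>x\<in>cube n. sqrt (Ber n p x * Ber n q x)) \<and>
         (\<Sum>x\<in>cube n. sqrt (Ber n p x * Ber n q x))
           \<le> sqrt (\<Prod>i<n. 1 - (p i - q i)^2)"
proof -
  have pq: "0 \<le> p i" "p i \<le> 1" "0 \<le> q i" "q i \<le> 1" if "i \<in> {..<n}" for i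
    using assms(2,3) that by (auto simp: less_imp_le)
  have "sqrt (\<Prod>i<n. (1 - (p i - q i)^2) / 2) \<le> (\<Prod>i<n. bernoulli_affinity (p i) (q i))"
    using square_diff_le_one[OF pq] bernoulli_affinity_square_lower[OF pq]
      bernoulli_affinity_nonneg[OF pq]
    by (intro sqrt_prod_le_prod) auto
  moreover have "(\<Prod>i<n. bernoulli_affinity (p i) (q i)) \<le> sqrt (\<Prod>i<n. 1 - (p i - q i)^2)"
    using bernoulli_affinity_square_upper[OF pq] bernoulli_affinity_nonneg[OF pq]
    by (intro prod_le_sqrt_prod)
  ultimately show ?thesis
    by (simp add: sum_cube_sqrt_Ber_mult)
qed

end
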